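(* Let $\chi$ be a kernel as described in the context and let $f:\mathbb{R}^+\to\mathbb{R}$ be bounded and log-uniformly continuous. Then for every $w>0$ and every $x\in\mathbb{R}^+$, $$|(I_w^{\chi}f)(x)-f(x)|\le\big(M_0(\chi)+M_1(\chi)\big)\,\omega\!\left(f,\frac{1}{w}\right).$$
   Context: A kernel is a continuous function $\chi:\mathbb{R}^+\to\mathbb{R}$ satisfying: (i) $\sum_{k=-\infty}^{+\infty}\chi(e^{-k}u)=1$ for every $u\in\mathbb{R}^+$; (ii) $M_2(\chi)<+\infty$ and $\lim_{\gamma\to+\infty}\sum_{|k-\log u|>\gamma}|\chi(e^{-k}u)|\,|k-\log u|^2=0$ uniformly with respect to $u\in\mathbb{R}^+$. Absolute moments: $M_\nu(\chi,u)=\sum_{k\in\mathbb{Z}}|\chi(e^{-k}u)|\,|k-\log u|^\nu$, $M_\nu(\chi)=\sup_{u>0}M_\nu(\chi,u)$. For $w>0$, $x\in\mathbb{R}^+$: $(I_w^{\chi}f)(x)=\sum_{k\in\mathbb{Z}}\chi(e^{-k}x^w)\,w\int_{k/w}^{(k+1)/w}f(e^u)\,du$. A function $f$ is log-uniformly continuous if for every $\epsilon>0$ there is $\delta>0$ with $|f(u)-f(v)|<\epsilon$ whenever $|\log u-\log v|\le\delta$. The logarithmic modulus of continuity is $\omega(f,\delta)=\sup\{|f(x)-f(y)|: x,y\in\mathbb{R}^+,\ |\log x-\log y|\le\delta\}$ for $\delta>0$. *)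

theory Defs
  imports "HOL-Analysis.Analysis"
begin

text \<open>Absolute moment M_nu(chi,u) (nu a natural number; 0^0 = 1 in Isabelle).\<close>
definition abs_moment :: "nat \<Rightarrow> (real \<Rightarrow> real) \<Rightarrow> real \<Rightarrow> real" where
  "abs_moment \<nu> K u =
     infsum (\<lambda>k::int. abs (K (exp (- real_of_int k) * u)) * abs (real_of_int k - ln u) ^ \<nu>) UNIV"

definition sup_moment :: "nat \<Rightarrow> (real \<Rightarrow> real) \<Rightarrow> real" where
  "sup_moment \<nu> K = (SUP u\<in>{0<..}. abs_moment \<nu> K u)"

definition kernel :: "(real \<Rightarrow> real) \<Rightarrow> bool" where
  "kernel K \<longleftrightarrow>
     continuous_on {0<..} K \<and>
     (\<forall>u>0. ((\<lambda>k::int. K (exp (- real_of_int k) * u)) has_sum 1) UNIV) \<and>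
     (\<forall>u>0. (\<lambda>k::int. abs (K (exp (- real_of_int k) * u)) * abs (real_of_int k - ln u) ^ 2)
               summable_on UNIV) \<and>
     bdd_above (abs_moment 2 K ` {0<..}) \<and>
     (\<forall>\<epsilon>>0. \<exists>\<Gamma>. \<forall>\<gamma>\<ge>\<Gamma>. \<forall>u>0.
        infsum (\<lambda>k::int. abs (K (exp (- real_of_int k) * u)) * abs (real_of_int k - ln u) ^ 2)
          {k::int. abs (real_of_int k - ln u) > \<gamma>} < \<epsilon>)"

definition kantorovich_op :: "(real \<Rightarrow> real) \<Rightarrow> real \<Rightarrow> (real \<Rightarrow> real) \<Rightarrow> real \<Rightarrow> real" where
  "kantorovich_op K w f x =
     infsum (\<lambda>k::int. K (exp (- real_of_int k) * x powr w) *
        (w * integral {real_of_int k / w .. (real_of_int k + 1) / w} (\<lambda>u. f (exp u)))) UNIV"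

definition log_uniformly_continuous :: "(real \<Rightarrow> real) \<Rightarrow> bool" where
  "log_uniformly_continuous f \<longleftrightarrow>
     (\<forall>\<epsilon>>0. \<exists>\<delta>>0. \<forall>u>0. \<forall>v>0. \<bar>ln u - ln v\<bar> \<le> \<delta> \<longrightarrow> \<bar>f u - f v\<bar> < \<epsilon>)"

definition log_modulus :: "(real \<Rightarrow> real) \<Rightarrow> real \<Rightarrow> real" where
  "log_modulus f \<delta> =
     (SUP p\<in>{(x, y). x > 0 \<and> y > 0 \<and> \<bar>ln x - ln y\<bar> \<le> \<delta>}. \<bar>f (fst p) - f (snd p)\<bar>)"

end

theory Submission
  imports Defs
begin

text \<open>Put \<open>G u = f (exp u)\<close>, so that \<open>(I_w f)(x) = \<Sum>\<^sub>k \<chi>(e\<^sup>-\<^sup>k x\<^sup>w) a\<^sub>k\<close> with \<open>a\<^sub>k\<close> the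
  mean of \<open>G\<close> over \<open>[k/w, (k+1)/w]\<close>, and \<open>\<omega>\<close> bounds the oscillation of \<open>G\<close> on intervals of length
  \<open>1/w\<close>. Chaining gives \<open>\<bar>G u - G l\<bar> \<le> c \<omega>\<close> whenever \<open>\<bar>u - l\<bar> \<le> c/w\<close> with \<open>c\<close> an integer;
  splitting the cell at the point of \<open>l + \<int>/w\<close> inside it and averaging these integer bounds yields
  \<open>\<bar>a\<^sub>k - G l\<bar> \<le> (1 + \<bar>k - w l\<bar>) \<omega>\<close>. Since the kernel weights sum to 1, the error is at most
  \<open>\<omega> \<Sum>\<^sub>k \<bar>\<chi>(e\<^sup>-\<^sup>k x\<^sup>w)\<bar> (1 + \<bar>k - w ln x\<bar>) \<le> \<omega> (M\<^sub>0 + M\<^sub>1)\<close>.\<close>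

lemma oscillation_le_nat_multiple:
  fixes g :: "real \<Rightarrow> real"
  assumes osc: "\<And>s t. \<bar>s - t\<bar> \<le> \<delta> \<Longrightarrow> \<bar>g s - g t\<bar> \<le> \<omega>"
  shows "\<bar>u - l\<bar> \<le> real c * \<delta> \<Longrightarrow> \<bar>g u - g l\<bar> \<le> real c * \<omega>"
proof (induction c arbitrary: u)
  case 0
  then show ?case by simp
next
  case (Suc c)
  define z where "z = l + (u - l) * real c / (real c + 1)"
  have step: "\<bar>u - l\<bar> / (real c + 1) \<le> \<delta>"
    using Suc.prems by (simp add: divide_le_eq algebra_simps)
  have "\<bar>z - l\<bar> = \<bar>u - l\<bar> / (real c + 1) * real c"
    by (simp add: z_def abs_mult)
  also have "\<dots> \<le> \<delta> * real c"
    using step by (intro mult_right_mono) auto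
  finally have "\<bar>g z - g l\<bar> \<le> real c * \<omega>"
    using Suc.IH by (simp add: mult.commute)
  moreover have "\<bar>g u - g z\<bar> \<le> \<omega>"
  proof -
    have "u - z = (u - l) / (real c + 1)" by (simp add: z_def field_simps)
    then show ?thesis using osc step by simp
  qed
  ultimately show ?case by (simp add: algebra_simps)
qed

lemma integral_deviation_le:
  fixes g :: "real \<Rightarrow> real"
  assumes cont: "continuous_on UNIV g"
    and osc: "\<And>s t. \<bar>s - t\<bar> \<le> \<delta> \<Longrightarrow> \<bar>g s - g t\<bar> \<le> \<omega>"
    and "p \<le> q"
    and near: "\<And>u. u \<in> {p..q} \<Longrightarrow> \<bar>u - l\<bar> \<le> real c * \<delta>"
  shows "\<bar>integral {p..q} (\<lambda>u. g u - g l)\<bar> \<le> (q - p) * (real c * \<omega>)"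
proof -
  have int: "((\<lambda>u. g u - g l) has_integral integral {p..q} (\<lambda>u. g u - g l)) {p..q}"
    by (intro integrable_integral integrable_continuous_interval continuous_intros
        continuous_on_subset[OF cont]) auto
  have bound: "norm (g u - g l) \<le> real c * \<omega>" if "u \<in> {p..q} - {}" for u
    using oscillation_le_nat_multiple[OF osc near] that by simp
  have "0 \<le> real c * \<omega>" using bound[of p] \<open>p \<le> q\<close> by (auto intro: order_trans)
  then show ?thesis
    using has_integral_bound_real[OF _ _ int bound] content_real[OF \<open>p \<le> q\<close>]
    by (simp add: mult.commute) blast
qed

text \<open>With \<open>n = \<lceil>a\<rceil>\<close>, the cell \<open>[a, a+1]\<close> splits into parts of lengths \<open>n - a\<close> and \<open>a + 1 - n\<close>
  on which \<open>\<bar>t\<bar>\<close> is at most the first, resp. second, integer factor.\<close>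

lemma weighted_cell_bound:
  fixes a :: real and n :: int
  assumes "a \<le> n" "n < a + 1"
  shows "(n - a) * real (nat (max \<bar>n - 1\<bar> \<bar>n\<bar>)) + (a + 1 - n) * real (nat (max \<bar>n\<bar> \<bar>n + 1\<bar>))
         \<le> 1 + \<bar>a\<bar>"
proof (cases "n \<ge> 1")
  case True
  then have "nat (max \<bar>n - 1\<bar> \<bar>n\<bar>) = nat n" "nat (max \<bar>n\<bar> \<bar>n + 1\<bar>) = nat n + 1" by auto
  moreover have "a \<ge> 0" using True assms by linarith
  ultimately show ?thesis using True by (simp add: algebra_simps)
next
  case False
  consider "n = 0" | "n \<le> -1" using False by linarith
  then show ?thesis
  proof cases
    case 1
    then show ?thesis using assms by simp
  next
    case 2
    then have "nat (max \<bar>n - 1\<bar> \<bar>n\<bar>) = nat (1 - n)" "nat (max \<bar>n\<bar> \<bar>n + 1\<bar>) = nat (- n)" by auto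
    moreover have "a < 0" using 2 assms by linarith
    ultimately show ?thesis using 2 by (simp add: algebra_simps of_nat_diff)
  qed
qed

lemma cell_average_deviation_le:
  fixes g :: "real \<Rightarrow> real" and k :: int and w l \<omega> :: real
  assumes cont: "continuous_on UNIV g"
    and osc: "\<And>s t. \<bar>s - t\<bar> \<le> 1 / w \<Longrightarrow> \<bar>g s - g t\<bar> \<le> \<omega>"
    and w: "w > 0"
  shows "\<bar>w * integral {k / w..(real_of_int k + 1) / w} g - g l\<bar> \<le> (1 + \<bar>k - w * l\<bar>) * \<omega>"
proof -
  define a where "a = k - w * l"
  define n where "n = \<lceil>a\<rceil>"
  define s where "s = l + n / w"
  define c1 where "c1 = nat (max \<bar>n - 1\<bar> \<bar>n\<bar>)"
  define c2 where "c2 = nat (max \<bar>n\<bar> \<bar>n + 1\<bar>)"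
  let ?I = "{k / w..(real_of_int k + 1) / w}" and ?h = "\<lambda>u. g u - g l"
  have an: "a \<le> n" "n < a + 1" unfolding n_def by linarith+
  have ws: "w * s = w * l + n" unfolding s_def using w by (simp add: field_simps)
  have s1: "k / w \<le> s" using an ws w unfolding a_def by (simp add: divide_le_eq mult.commute)
  have s2: "s \<le> (real_of_int k + 1) / w" using an ws w unfolding a_def by (simp add: le_divide_eq mult.commute)
  have "\<omega> \<ge> 0" using osc[of 0 0] w by auto
  have "integral ?I ?h = integral ?I g - g l / w"
    using w by (subst integral_diff) (auto intro: integrable_continuous_interval
        continuous_on_subset[OF cont] simp: field_simps)
  moreover have "?h integrable_on ?I"
    by (intro integrable_continuous_interval continuous_intros continuous_on_subset[OF cont]) auto
  then have "integral ?I ?h = integral {k / w..s} ?h + integral {s..(real_of_int k + 1) / w} ?h"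
    using Henstock_Kurzweil_Integration.integral_combine[OF s1 s2] by metis
  ultimately have "w * integral ?I g - g l
      = w * (integral {k / w..s} ?h + integral {s..(real_of_int k + 1) / w} ?h)"
    using w by (simp add: field_simps)
  moreover have "\<bar>integral {k / w..s} ?h\<bar> \<le> (s - k / w) * (real c1 * \<omega>)"
  proof (rule integral_deviation_le[OF cont osc s1])
    fix u assume "u \<in> {k / w..s}"
    then have "k \<le> w * u" "w * u \<le> w * s" using w by (auto simp: divide_le_eq mult.commute)
    then have "\<bar>w * (u - l)\<bar> \<le> real c1" unfolding c1_def using an ws a_def by (auto simp: algebra_simps)
    then show "\<bar>u - l\<bar> \<le> real c1 * (1 / w)" using w by (simp add: abs_mult le_divide_eq mult.commute)
  qed
  moreover have "\<bar>integral {s..(real_of_int k + 1) / w} ?h\<bar> \<le> ((real_of_int k + 1) / w - s) * (real c2 * \<omega>)"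
  proof (rule integral_deviation_le[OF cont osc s2])
    fix u assume "u \<in> {s..(real_of_int k + 1) / w}"
    then have "w * s \<le> w * u" "w * u \<le> k + 1" using w by (auto simp: le_divide_eq mult.commute)
    then have "\<bar>w * (u - l)\<bar> \<le> real c2" unfolding c2_def using an ws a_def by (auto simp: algebra_simps)
    then show "\<bar>u - l\<bar> \<le> real c2 * (1 / w)" using w by (simp add: abs_mult le_divide_eq mult.commute)
  qed
  ultimately have "\<bar>w * integral ?I g - g l\<bar>
      \<le> w * ((s - k / w) * (real c1 * \<omega>) + ((real_of_int k + 1) / w - s) * (real c2 * \<omega>))"
    using w by (simp add: abs_mult)
  also have "\<dots> = ((n - a) * real c1 + (a + 1 - n) * real c2) * \<omega>"
    using w ws unfolding a_def by (simp add: field_simps)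
  also have "\<dots> \<le> (1 + \<bar>a\<bar>) * \<omega>"
    unfolding c1_def c2_def by (rule mult_right_mono[OF weighted_cell_bound[OF an] \<open>\<omega> \<ge> 0\<close>])
  finally show ?thesis unfolding a_def .
qed

lemma kernel_bounded_near_one:
  assumes "kernel K"
  obtains B where "B \<ge> 0" "\<And>y. y \<in> {exp (-1)..exp 1} \<Longrightarrow> \<bar>K y\<bar> \<le> B"
proof -
  have "continuous_on {exp (-1)..exp 1} K"
    using assms unfolding kernel_def
    by (elim conjE continuous_on_subset) (auto intro: less_le_trans[OF exp_gt_zero])
  hence "bounded (K ` {exp (-1)..exp 1})"
    by (intro compact_imp_bounded compact_continuous_image) auto
  then obtain B where B: "\<And>y. y \<in> K ` {exp (-1)..exp 1} \<Longrightarrow> norm y \<le> B"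
    by (auto simp: bounded_iff)
  have "B \<ge> 0" using B[of "K 1"] by (auto intro: order_trans[OF abs_ge_zero])
  thus ?thesis using B that by auto
qed

lemma kernel_moment_dominated:
  assumes K: "kernel K" and B: "B \<ge> 0" "\<And>y. y \<in> {exp (-1)..exp 1} \<Longrightarrow> \<bar>K y\<bar> \<le> B"
    and u: "u > 0" and nu: "\<nu> \<le> 2"
  shows "(\<lambda>k::int. \<bar>K (exp (- real_of_int k) * u)\<bar> * \<bar>real_of_int k - ln u\<bar> ^ \<nu>) summable_on UNIV"
    and "abs_moment \<nu> K u \<le> sup_moment 2 K + 2 * B"
proof -
  define t where "t = (\<lambda>\<nu> (k::int). \<bar>K (exp (- real_of_int k) * u)\<bar> * \<bar>real_of_int k - ln u\<bar> ^ \<nu>)"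
  define F where "F = {\<lfloor>ln u\<rfloor>, \<lfloor>ln u\<rfloor> + 1}"
  define e where "e = (\<lambda>k::int. if k \<in> F then B else 0)"
  have s2: "t 2 summable_on UNIV" using K u unfolding kernel_def t_def by blast
  have he: "(e has_sum (2*B)) UNIV"
    by (rule has_sum_finite_neutralI[of F]) (auto simp: F_def e_def)
  hence se: "e summable_on UNIV" by (auto simp: summable_on_def)
  have pt: "t \<nu> k \<le> t 2 k + e k" for k
  proof (cases "k \<in> F")
    case True
    hence r: "\<bar>real_of_int k - ln u\<bar> \<le> 1" unfolding F_def by auto linarith+
    have "exp (- real_of_int k) * u = exp (ln u - k)" using u by (simp add: exp_diff exp_minus field_simps)
    moreover have "exp (ln u - k) \<in> {exp (-1)..exp 1}" using r by auto
    ultimately have kb: "\<bar>K (exp (- real_of_int k) * u)\<bar> \<le> B" using B by simp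
    have "\<bar>real_of_int k - ln u\<bar> ^ \<nu> \<le> 1" using r by (simp add: power_le_one)
    hence "t \<nu> k \<le> B * 1" unfolding t_def using kb by (intro mult_mono) auto
    moreover have "t 2 k \<ge> 0" unfolding t_def by simp
    ultimately show ?thesis using True by (simp add: e_def)
  next
    case False
    hence r: "\<bar>real_of_int k - ln u\<bar> \<ge> 1" unfolding F_def by auto linarith+
    hence "\<bar>real_of_int k - ln u\<bar> ^ \<nu> \<le> \<bar>real_of_int k - ln u\<bar> ^ 2" using nu
      by (intro power_increasing) auto
    hence "t \<nu> k \<le> t 2 k" unfolding t_def by (intro mult_left_mono) auto
    thus ?thesis using False by (simp add: e_def)
  qed
  have sum2: "(\<lambda>k. t 2 k + e k) summable_on UNIV" by (rule summable_on_add[OF s2 se])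
  have st: "t \<nu> summable_on UNIV"
    by (rule summable_on_comparison_test[OF sum2]) (use pt in \<open>auto simp: t_def\<close>)
  thus "(\<lambda>k::int. \<bar>K (exp (- real_of_int k) * u)\<bar> * \<bar>real_of_int k - ln u\<bar> ^ \<nu>) summable_on UNIV"
    by (simp add: t_def)
  have "abs_moment \<nu> K u = infsum (t \<nu>) UNIV" by (simp add: abs_moment_def t_def)
  also have "\<dots> \<le> infsum (\<lambda>k. t 2 k + e k) UNIV" by (rule infsum_mono[OF st sum2 pt])
  also have "\<dots> = infsum (t 2) UNIV + 2*B" using infsum_add[OF s2 se] infsumI[OF he] by simp
  also have "infsum (t 2) UNIV = abs_moment 2 K u" by (simp add: abs_moment_def t_def)
  also have "abs_moment 2 K u \<le> sup_moment 2 K"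
    unfolding sup_moment_def using K u unfolding kernel_def by (intro cSUP_upper) auto
  finally show "abs_moment \<nu> K u \<le> sup_moment 2 K + 2 * B" by simp
qed

lemma bdd_above_abs_moment:
  assumes K: "kernel K" and nu: "\<nu> \<le> 2"
  shows "bdd_above (abs_moment \<nu> K ` {0<..})"
proof -
  obtain B where "B \<ge> 0" "\<And>y. y \<in> {exp (-1)..exp 1} \<Longrightarrow> \<bar>K y\<bar> \<le> B"
    using kernel_bounded_near_one[OF K] by blast
  thus ?thesis using kernel_moment_dominated(2)[OF K _ _ _ nu] by (intro bdd_aboveI[of _ "sup_moment 2 K + 2 * B"]) auto
qed

lemma abs_moment_le_sup_moment:
  assumes "kernel K" "\<nu> \<le> 2" "u > 0"
  shows "abs_moment \<nu> K u \<le> sup_moment \<nu> K"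
  unfolding sup_moment_def using assms by (intro cSUP_upper bdd_above_abs_moment) auto

lemma kernel_average_deviation_le:
  fixes K :: "real \<Rightarrow> real" and a :: "int \<Rightarrow> real"
  assumes K: "kernel K" and u: "u > 0"
    and dev: "\<And>k. \<bar>a k - c\<bar> \<le> (1 + \<bar>real_of_int k - ln u\<bar>) * \<omega>"
  shows "\<bar>infsum (\<lambda>k. K (exp (- real_of_int k) * u) * a k) UNIV - c\<bar>
           \<le> (sup_moment 0 K + sup_moment 1 K) * \<omega>"
proof -
  define T where "T = (\<lambda>k::int. K (exp (- real_of_int k) * u))"
  define t where "t = (\<lambda>\<nu> (k::int). \<bar>T k\<bar> * \<bar>real_of_int k - ln u\<bar> ^ \<nu>)"
  define d where "d = (\<lambda>k. T k * (a k - c))"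
  have "\<omega> \<ge> 0"
  proof -
    have "0 \<le> (1 + \<bar>real_of_int 0 - ln u\<bar>) * \<omega>" by (rule order_trans[OF abs_ge_zero dev])
    then show ?thesis by (simp add: zero_le_mult_iff) (smt (verit) abs_ge_zero)
  qed
  obtain B where B: "B \<ge> 0" "\<And>y. y \<in> {exp (-1)..exp 1} \<Longrightarrow> \<bar>K y\<bar> \<le> B"
    using kernel_bounded_near_one[OF K] by blast
  have s0: "t 0 summable_on UNIV" and s1: "t 1 summable_on UNIV"
    using kernel_moment_dominated(1)[OF K B u, of 0] kernel_moment_dominated(1)[OF K B u, of 1]
    by (simp_all add: t_def T_def)
  have sb: "(\<lambda>k. \<omega> * (t 0 k + t 1 k)) summable_on UNIV"
    by (intro summable_on_cmult_right summable_on_add s0 s1)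
  have db: "norm (d k) \<le> \<omega> * (t 0 k + t 1 k)" for k
  proof -
    have "norm (d k) \<le> \<bar>T k\<bar> * ((1 + \<bar>real_of_int k - ln u\<bar>) * \<omega>)"
      unfolding d_def real_norm_def abs_mult by (intro mult_left_mono dev) auto
    also have "\<dots> = \<omega> * (t 0 k + t 1 k)" unfolding t_def by (simp add: algebra_simps)
    finally show ?thesis .
  qed
  have sad: "(\<lambda>k. norm (d k)) summable_on UNIV"
    by (rule summable_on_comparison_test[OF sb]) (use db in auto)
  have hT: "(T has_sum 1) UNIV" using K u unfolding kernel_def T_def by blast
  then have sT: "T summable_on UNIV" by (auto simp: summable_on_def)
  have "infsum (\<lambda>k. T k * a k) UNIV = infsum (\<lambda>k. c * T k + d k) UNIV"
    by (intro infsum_cong) (simp add: d_def algebra_simps)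
  also have "\<dots> = c + infsum d UNIV"
    using infsum_add[OF summable_on_cmult_right[OF sT] abs_summable_summable[OF sad]]
      infsum_cmult_right[of c T UNIV] sT infsumI[OF hT]
    by simp
  finally have "\<bar>infsum (\<lambda>k. T k * a k) UNIV - c\<bar> = \<bar>infsum d UNIV\<bar>" by simp
  also have "\<dots> \<le> infsum (\<lambda>k. norm (d k)) UNIV"
    using norm_infsum_bound[OF sad] by simp
  also have "\<dots> \<le> infsum (\<lambda>k. \<omega> * (t 0 k + t 1 k)) UNIV"
    by (rule infsum_mono[OF sad sb db])
  also have "\<dots> = \<omega> * (abs_moment 0 K u + abs_moment 1 K u)"
    using infsum_add[OF s0 s1] infsum_cmult_right[of \<omega> "\<lambda>k. t 0 k + t 1 k" UNIV]
      summable_on_add[OF s0 s1]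
    by (simp add: abs_moment_def t_def T_def)
  also have "\<dots> \<le> \<omega> * (sup_moment 0 K + sup_moment 1 K)"
    using \<open>\<omega> \<ge> 0\<close> abs_moment_le_sup_moment[OF K _ u] by (intro mult_left_mono add_mono) auto
  finally show ?thesis by (simp add: T_def mult.commute)
qed

lemma log_modulus_ge:
  assumes "bounded (f ` {0<..})" and "\<bar>s - t\<bar> \<le> \<delta>"
  shows "\<bar>f (exp s) - f (exp t)\<bar> \<le> log_modulus f \<delta>"
proof -
  let ?S = "{(x, y). x > 0 \<and> y > 0 \<and> \<bar>ln x - ln y\<bar> \<le> \<delta>}"
  obtain B where B: "\<And>y. y > 0 \<Longrightarrow> \<bar>f y\<bar> \<le> B"
    using assms(1) by (auto simp: bounded_iff)
  have "bdd_above ((\<lambda>p. \<bar>f (fst p) - f (snd p)\<bar>) ` ?S)"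
  proof (rule bdd_aboveI)
    fix z assume "z \<in> (\<lambda>p. \<bar>f (fst p) - f (snd p)\<bar>) ` ?S"
    then obtain a b where "z = \<bar>f a - f b\<bar>" "a > 0" "b > 0" by auto
    then show "z \<le> 2 * B" using B[of a] B[of b] by linarith
  qed
  moreover have "(exp s, exp t) \<in> ?S" using assms(2) by auto
  ultimately show ?thesis
    unfolding log_modulus_def by (metis (no_types, lifting) cSUP_upper fst_conv snd_conv)
qed

lemma log_uniformly_continuous_comp_exp:
  assumes "log_uniformly_continuous f"
  shows "uniformly_continuous_on UNIV (\<lambda>u. f (exp u))"
  unfolding uniformly_continuous_on_def dist_real_def
proof (intro allI impI)
  fix e :: real assume "e > 0"
  then obtain d where "d > 0" and d: "\<forall>u>0. \<forall>v>0. \<bar>ln u - ln v\<bar> \<le> d \<longrightarrow> \<bar>f u - f v\<bar> < e"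
    using assms unfolding log_uniformly_continuous_def by blast
  then have "\<bar>f (exp s) - f (exp t)\<bar> < e" if "\<bar>s - t\<bar> < d" for s t
    using d[rule_format, of "exp s" "exp t"] that by simp
  then show "\<exists>d>0. \<forall>t\<in>UNIV. \<forall>s\<in>UNIV. \<bar>s - t\<bar> < d \<longrightarrow> \<bar>f (exp s) - f (exp t)\<bar> < e"
    using \<open>d > 0\<close> by blast
qed

theorem theorem3:
  fixes K f :: "real \<Rightarrow> real" and w x :: real
  assumes "kernel K"
    and "bounded (f ` {0<..})"
    and "log_uniformly_continuous f"
    and "w > 0" and "x > 0"
  shows "\<bar>kantorovich_op K w f x - f x\<bar>
           \<le> (sup_moment 0 K + sup_moment 1 K) * log_modulus f (1 / w)"
proof -
  define G where "G = (\<lambda>u. f (exp u))"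
  have cont: "continuous_on UNIV G"
    unfolding G_def using log_uniformly_continuous_comp_exp[OF assms(3)]
    by (rule uniformly_continuous_imp_continuous)
  have osc: "\<bar>G s - G t\<bar> \<le> log_modulus f (1 / w)" if "\<bar>s - t\<bar> \<le> 1 / w" for s t
    unfolding G_def using log_modulus_ge[OF assms(2) that] .
  have "\<bar>w * integral {real_of_int k / w..(real_of_int k + 1) / w} G - f x\<bar>
      \<le> (1 + \<bar>real_of_int k - ln (x powr w)\<bar>) * log_modulus f (1 / w)" for k
    using cell_average_deviation_le[OF cont osc \<open>w > 0\<close>, of k "ln x"] \<open>x > 0\<close>
    by (simp add: G_def ln_powr)
  from kernel_average_deviation_le[OF assms(1) _ this] \<open>x > 0\<close>
  show ?thesis by (simp add: kantorovich_op_def G_def)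
qed

end
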